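(* Let $s,t,n$ be positive integers with $1\le s\le t\le n$ and $s\mid n$. Then \[ \bigl|\overline{\mathcal{R}}(s,t,n)\bigr|\;\le\;\bigl|\mathcal{R}(s,t,n)\bigr|\;\le\;(t-s)!\cdot\left(\frac{t!}{(t-s)!}\right)^{n/s}. \]
   Context: For distinct reals $\mathbf{c}=(c_0,\dots,c_{t-1})$, let $f_{\mathbf{c}}\in S_t$ (the permutations of $\{0,\dots,t-1\}$) be given by $f_{\mathbf{c}}(i)=|\{j: c_j<c_i\}|$. For $\mathbf{c}=(c_0,\dots,c_{n-1})\in\mathbb{R}^n$ with distinct entries and $1\le t\le n$, $0\le p\le n-1$, the window $\mathbf{c}_{p,t}=(c_p,c_{p+1},\dots,c_{p+t-1})$ with indices taken modulo $n$. The $(s,t,n)$-local rank-modulation demodulation maps $\mathbf{c}$ to $\mathbf{f}_{\mathbf{c}}=(f_{\mathbf{c}_{0,t}},f_{\mathbf{c}_{s,t}},f_{\mathbf{c}_{2s,t}},\dots,f_{\mathbf{c}_{n-s,t}})$, a sequence of $n/s$ permutations in $S_t$. $\mathcal{R}(s,t,n)$ is the set of all sequences $\mathbf{f}_{\mathbf{c}}$ obtained this way from some $\mathbf{c}\in\mathbb{R}^n$ with distinct entries. For $f\in S_t$ and position $k\in\{0,\dots,t-1\}$, the factoradic digit of $f$ at position $k$ is $|\{k'>k: f(k')<f(k)\}|$; let $\bar f$ denote the vector of the digits at positions $0,1,\dots,s-1$ (the $s$ most significant factoradic digits). $\overline{\mathcal{R}}(s,t,n)$ is the set of all sequences $(\bar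 f_{\mathbf{c}_{0,t}},\bar f_{\mathbf{c}_{s,t}},\dots,\bar f_{\mathbf{c}_{n-s,t}})$ for $\mathbf{c}\in\mathbb{R}^n$ with distinct entries. *)

theory Defs
  imports Complex_Main
begin

text \<open>A vector c in R^n is a function nat => real, only its values on {0..<n} matter.
  Permutations of {0..<t} are represented as lists [f 0, ..., f (t-1)].\<close>

definition window :: "(nat \<Rightarrow> real) \<Rightarrow> nat \<Rightarrow> nat \<Rightarrow> nat \<Rightarrow> real" where
  "window c n p = (\<lambda>i. c ((p + i) mod n))"

definition rank_perm :: "(nat \<Rightarrow> real) \<Rightarrow> nat \<Rightarrow> nat list" where
  "rank_perm w t = map (\<lambda>i. card {j. j < t \<and> w j < w i}) [0..<t]"

definition factoradic_digit :: "nat list \<Rightarrow> nat \<Rightarrow> nat" where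
  "factoradic_digit f k = card {k'. k < k' \<and> k' < length f \<and> f ! k' < f ! k}"

definition top_digits :: "nat \<Rightarrow> nat list \<Rightarrow> nat list" where
  "top_digits s f = map (factoradic_digit f) [0..<s]"

definition LRM :: "nat \<Rightarrow> nat \<Rightarrow> nat \<Rightarrow> nat list list set" where
  "LRM s t n = {map (\<lambda>m. rank_perm (window c n (m * s)) t) [0..<n div s] | c. inj_on c {..<n}}"

definition LRM_bar :: "nat \<Rightarrow> nat \<Rightarrow> nat \<Rightarrow> nat list list set" where
  "LRM_bar s t n = {map (\<lambda>m. top_digits s (rank_perm (window c n (m * s)) t)) [0..<n div s]
                    | c. inj_on c {..<n}}"

end

theory Submission
  imports Defs
begin

text \<open>Consecutive windows overlap in t - s positions, so the relative order of the first
  t - s entries of a window is fixed by the previous window.  Hence a sequence in R(s,t,n) is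
  determined by the relative order of the first t - s entries of its first permutation
  ((t-s)! possibilities) and by the last s entries of each of its n/s permutations
  (t!/(t-s)! possibilities each).  The first inequality holds because the digit vectors are
  functions of the permutations.\<close>

definition rank_pattern :: "'a::linorder list \<Rightarrow> nat list" where
  "rank_pattern xs = map (\<lambda>i. card {j. j < length xs \<and> xs ! j < xs ! i}) [0..<length xs]"

lemma length_rank_pattern [simp]: "length (rank_pattern xs) = length xs"
  by (simp add: rank_pattern_def)

lemma nth_rank_pattern:
  "i < length xs \<Longrightarrow> rank_pattern xs ! i = card {j. j < length xs \<and> xs ! j < xs ! i}"
  by (simp add: rank_pattern_def)

lemma rank_pattern_nth_less_iff:
  assumes "i < length xs" "j < length xs"
  shows "rank_pattern xs ! i < rank_pattern xs ! j \<longleftrightarrow> xs ! i < xs ! j"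
proof (cases "xs ! i < xs ! j")
  case True
  then have "{k. k < length xs \<and> xs ! k < xs ! i} \<subset> {k. k < length xs \<and> xs ! k < xs ! j}"
    using assms by auto
  then have "card {k. k < length xs \<and> xs ! k < xs ! i} < card {k. k < length xs \<and> xs ! k < xs ! j}"
    by (rule psubset_card_mono[rotated]) simp
  then show ?thesis using True assms by (simp add: nth_rank_pattern)
next
  case False
  then have "{k. k < length xs \<and> xs ! k < xs ! j} \<subseteq> {k. k < length xs \<and> xs ! k < xs ! i}"
    by auto
  then have "card {k. k < length xs \<and> xs ! k < xs ! j} \<le> card {k. k < length xs \<and> xs ! k < xs ! i}"
    by (rule card_mono[rotated]) simp
  then show ?thesis using False assms by (simp add: nth_rank_pattern)
qed

lemma rank_pattern_eqI:
  assumes "length xs = length ys"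
    and "\<And>i j. i < length xs \<Longrightarrow> j < length xs \<Longrightarrow> xs ! i < xs ! j \<longleftrightarrow> ys ! i < ys ! j"
  shows "rank_pattern xs = rank_pattern ys"
  unfolding rank_pattern_def using assms
  by (auto intro!: map_cong arg_cong[where f = card])

lemma rank_pattern_take: "rank_pattern (take k (rank_pattern xs)) = rank_pattern (take k xs)"
  by (rule rank_pattern_eqI) (simp_all add: rank_pattern_nth_less_iff)

lemma rank_pattern_drop: "rank_pattern (drop k (rank_pattern xs)) = rank_pattern (drop k xs)"
  by (rule rank_pattern_eqI) (simp_all add: rank_pattern_nth_less_iff)

lemma distinct_rank_pattern:
  assumes "distinct xs"
  shows "distinct (rank_pattern xs)"
  unfolding distinct_conv_nth
proof (intro allI impI)
  fix i j assume ij: "i < length (rank_pattern xs)" "j < length (rank_pattern xs)" "i \<noteq> j"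
  then have "xs ! i \<noteq> xs ! j" using assms by (simp add: nth_eq_iff_index_eq)
  then show "rank_pattern xs ! i \<noteq> rank_pattern xs ! j"
    using ij rank_pattern_nth_less_iff[of i xs j] rank_pattern_nth_less_iff[of j xs i]
    by (auto simp: neq_iff)
qed

lemma set_rank_pattern:
  assumes "distinct xs"
  shows "set (rank_pattern xs) = {0..<length xs}"
proof (rule card_subset_eq)
  show "set (rank_pattern xs) \<subseteq> {0..<length xs}"
  proof
    fix x assume "x \<in> set (rank_pattern xs)"
    then obtain i where i: "i < length xs" "x = rank_pattern xs ! i"
      by (auto simp: in_set_conv_nth)
    have "{j. j < length xs \<and> xs ! j < xs ! i} \<subseteq> {0..<length xs} - {i}" by auto
    then have "card {j. j < length xs \<and> xs ! j < xs ! i} \<le> card ({0..<length xs} - {i})"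
      by (rule card_mono[rotated]) simp
    then show "x \<in> {0..<length xs}" using i by (simp add: nth_rank_pattern)
  qed
  show "card (set (rank_pattern xs)) = card {0..<length xs}"
    using distinct_card[OF distinct_rank_pattern[OF assms]] by simp
qed simp

lemma card_less_eq_imp_eq:
  fixes x y :: "'a::linorder"
  assumes "finite A" "x \<in> A" "y \<in> A" "card {z\<in>A. z < x} = card {z\<in>A. z < y}"
  shows "x = y"
proof (rule ccontr)
  have mono: "card {z\<in>A. z < u} < card {z\<in>A. z < v}" if "u \<in> A" "v \<in> A" "u < v" for u v
    using that assms(1) by (intro psubset_card_mono) auto
  assume "x \<noteq> y"
  then show False using mono[of x y] mono[of y x] assms(2-4) by (auto simp: neq_iff)
qed

lemma nth_rank_pattern_distinct:
  assumes "distinct xs" "i < length xs"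
  shows "rank_pattern xs ! i = card {y\<in>set xs. y < xs ! i}"
proof -
  have "{y\<in>set xs. y < xs ! i} = (!) xs ` {j. j < length xs \<and> xs ! j < xs ! i}"
    by (auto simp: in_set_conv_nth)
  moreover have "inj_on ((!) xs) {j. j < length xs \<and> xs ! j < xs ! i}"
    using assms by (intro inj_on_nth) auto
  ultimately show ?thesis using assms by (simp add: nth_rank_pattern card_image)
qed

lemma rank_pattern_inj:
  assumes "distinct xs" "distinct ys" "set xs = set ys" "rank_pattern xs = rank_pattern ys"
  shows "xs = ys"
proof (rule nth_equalityI)
  have "length xs = card (set xs)" using distinct_card[OF assms(1)] by simp
  also have "\<dots> = length ys" using distinct_card[OF assms(2)] assms(3) by simp
  finally show len: "length xs = length ys" .
  fix i assume i: "i < length xs"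
  then have i': "i < length ys" using len by simp
  have "rank_pattern xs ! i = rank_pattern ys ! i" using assms(4) by simp
  then have card: "card {y\<in>set xs. y < xs ! i} = card {y\<in>set xs. y < ys ! i}"
    using nth_rank_pattern_distinct[OF assms(1) i] nth_rank_pattern_distinct[OF assms(2) i'] assms(3)
    by simp
  have "xs ! i \<in> set xs" using i by (rule nth_mem)
  moreover have "ys ! i \<in> set xs" unfolding assms(3) using i' by (rule nth_mem)
  ultimately show "xs ! i = ys ! i" using card_less_eq_imp_eq[of "set xs" "xs ! i" "ys ! i"] card by simp
qed

lemma eq_if_rank_pattern_take_eq_drop_eq:
  assumes "distinct g" "distinct g'" "set g = set g'"
    and "rank_pattern (take r g) = rank_pattern (take r g')" "drop r g = drop r g'"
  shows "g = g'"
proof -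
  have "set (take r h) = set h - set (drop r h)" if "distinct h" for h :: "'a list"
  proof -
    have "set h = set (take r h) \<union> set (drop r h)" by (metis append_take_drop_id set_append)
    with set_take_disj_set_drop_if_distinct[OF that, of r r] show ?thesis by auto
  qed
  then have "set (take r g) = set (take r g')" using assms(1-3,5) by simp
  then have "take r g = take r g'"
    by (intro rank_pattern_inj[of "take r g"]) (use assms in simp_all)
  then have "take r g @ drop r g = take r g' @ drop r g'" using assms(5) by simp
  then show ?thesis by simp
qed

lemma overlapping_chain_eq:
  fixes F F' :: "'a::linorder list list"
  assumes len: "length F = length F'"
    and perm: "\<And>g. g \<in> set F \<union> set F' \<Longrightarrow> distinct g \<and> set g = A"
    and chain: "\<And>m. Suc m < length F \<Longrightarrow> rank_pattern (take r (F ! Suc m)) = rank_pattern (drop s (F ! m))"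
    and chain': "\<And>m. Suc m < length F \<Longrightarrow> rank_pattern (take r (F' ! Suc m)) = rank_pattern (drop s (F' ! m))"
    and head: "rank_pattern (take r (hd F)) = rank_pattern (take r (hd F'))"
    and tails: "map (drop r) F = map (drop r) F'"
  shows "F = F'"
proof (rule nth_equalityI)
  show "length F = length F'" by fact
  have entry_eq: "F ! m = F' ! m"
    if "m < length F" "rank_pattern (take r (F ! m)) = rank_pattern (take r (F' ! m))" for m
  proof (rule eq_if_rank_pattern_take_eq_drop_eq)
    show "distinct (F ! m)" "distinct (F' ! m)" "set (F ! m) = set (F' ! m)"
      using perm[of "F ! m"] perm[of "F' ! m"] that(1) len by auto
    show "drop r (F ! m) = drop r (F' ! m)"
      using arg_cong[OF tails, of "\<lambda>L. L ! m"] that(1) len by simp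
  qed fact
  show "F ! m = F' ! m" if "m < length F" for m
    using that
  proof (induction m)
    case 0
    then have "F \<noteq> []" "F' \<noteq> []" using len by auto
    then show ?case using head entry_eq[of 0] by (simp add: hd_conv_nth)
  next
    case (Suc m)
    then show ?case using chain[of m] chain'[of m] entry_eq[of "Suc m"] by simp
  qed
qed

lemma rank_perm_eq_rank_pattern: "rank_perm w t = rank_pattern (map w [0..<t])"
  unfolding rank_perm_def rank_pattern_def by (auto intro!: map_cong arg_cong[where f = card])

lemma add_left_mod_imp_eq:
  fixes p i j n :: nat
  assumes "(p + i) mod n = (p + j) mod n" "i < n" "j < n"
  shows "i = j"
proof -
  have "i = j" if "(p + i) mod n = (p + j) mod n" "i < n" "j < n" "i \<le> j" for i j
  proof -
    have "n dvd j - i" using that mod_eq_dvd_iff_nat[of "p + i" "p + j" n] by simp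
    then show ?thesis using that nat_dvd_not_less[of "j - i" n] by linarith
  qed
  then show ?thesis using assms by (metis nat_le_linear)
qed

lemma distinct_map_window:
  assumes "inj_on c {..<n}" "t \<le> n"
  shows "distinct (map (window c n p) [0..<t])"
proof -
  have "inj_on (window c n p) {0..<t}"
  proof (rule inj_onI)
    fix i j assume ij: "i \<in> {0..<t}" "j \<in> {0..<t}" "window c n p i = window c n p j"
    then have "(p + i) mod n = (p + j) mod n"
      using assms inj_onD[OF assms(1)] by (simp add: window_def)
    then show "i = j" by (rule add_left_mod_imp_eq) (use ij assms(2) in auto)
  qed
  then show ?thesis by (simp add: distinct_map)
qed

lemma LRM_entries:
  assumes "F \<in> LRM s t n" "s \<le> t" "t \<le> n"
  shows "length F = n div s"
    and "\<And>g. g \<in> set F \<Longrightarrow> distinct g \<and> set g = {0..<t}"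
    and "\<And>m. Suc m < length F \<Longrightarrow> rank_pattern (take (t - s) (F ! Suc m)) = rank_pattern (drop s (F ! m))"
proof -
  obtain c where c: "inj_on c {..<n}"
    and F: "F = map (\<lambda>m. rank_pattern (map (window c n (m * s)) [0..<t])) [0..<n div s]"
    using assms(1) unfolding LRM_def rank_perm_eq_rank_pattern by blast
  show "length F = n div s" using F by simp
  show "distinct g \<and> set g = {0..<t}" if "g \<in> set F" for g
    using that distinct_map_window[OF c assms(3)]
    by (auto simp: F distinct_rank_pattern set_rank_pattern)
  show "rank_pattern (take (t - s) (F ! Suc m)) = rank_pattern (drop s (F ! m))"
    if "Suc m < length F" for m
  proof -
    have "take (t - s) (map (window c n (Suc m * s)) [0..<t]) = drop s (map (window c n (m * s)) [0..<t])"
      using assms(2) by (intro nth_equalityI) (auto simp: window_def add.assoc add.left_commute)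
    then show ?thesis
      using that by (simp add: F rank_pattern_take rank_pattern_drop del: upt_Suc)
  qed
qed

definition arrangements :: "'a set \<Rightarrow> nat \<Rightarrow> 'a list set" where
  "arrangements A k = {xs. length xs = k \<and> distinct xs \<and> set xs \<subseteq> A}"

lemma finite_arrangements: "finite A \<Longrightarrow> finite (arrangements A k)"
  unfolding arrangements_def
  by (rule finite_subset[OF _ finite_lists_length_eq[of A k]]) auto

lemma card_arrangements:
  "finite A \<Longrightarrow> k \<le> card A \<Longrightarrow> card (arrangements A k) = \<Prod>{card A - k + 1..card A}"
  unfolding arrangements_def by (rule card_lists_distinct_length_eq)

definition LRM_code :: "nat \<Rightarrow> nat list list \<Rightarrow> nat list \<times> nat list list" where
  "LRM_code r F = (rank_pattern (take r (hd F)), map (drop r) F)"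

lemma LRM_code_image:
  assumes "1 \<le> s" "s \<le> t" "t \<le> n"
  shows "LRM_code (t - s) ` LRM s t n
    \<subseteq> arrangements {0..<t - s} (t - s) \<times> {L. set L \<subseteq> arrangements {0..<t} s \<and> length L = n div s}"
proof (rule image_subsetI)
  fix F assume F: "F \<in> LRM s t n"
  note entries = LRM_entries[OF F assms(2,3)]
  have perm: "distinct g" "length g = t" "set g = {0..<t}" if "g \<in> set F" for g
    using entries(2)[OF that] distinct_card[of g] by auto
  have "F \<noteq> []" using entries(1) assms div_greater_zero_iff[of n s] by auto
  then have "rank_pattern (take (t - s) (hd F)) \<in> arrangements {0..<t - s} (t - s)"
    using perm[OF hd_in_set] by (simp add: arrangements_def distinct_rank_pattern set_rank_pattern)
  moreover have "drop (t - s) g \<in> arrangements {0..<t} s" if "g \<in> set F" for g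
    using perm[OF that] assms(2) by (auto simp: arrangements_def dest: in_set_dropD)
  ultimately show "LRM_code (t - s) F
    \<in> arrangements {0..<t - s} (t - s) \<times> {L. set L \<subseteq> arrangements {0..<t} s \<and> length L = n div s}"
    using entries(1) by (auto simp: LRM_code_def)
qed

lemma inj_on_LRM_code:
  assumes "s \<le> t" "t \<le> n"
  shows "inj_on (LRM_code (t - s)) (LRM s t n)"
proof (rule inj_onI)
  fix F F' assume F: "F \<in> LRM s t n" and F': "F' \<in> LRM s t n"
    and "LRM_code (t - s) F = LRM_code (t - s) F'"
  note entries = LRM_entries[OF F assms] and entries' = LRM_entries[OF F' assms]
  have "rank_pattern (take (t - s) (hd F)) = rank_pattern (take (t - s) (hd F'))"
    and "map (drop (t - s)) F = map (drop (t - s)) F'"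
    using \<open>LRM_code (t - s) F = LRM_code (t - s) F'\<close> by (simp_all add: LRM_code_def)
  moreover have len: "length F = length F'" using entries(1) entries'(1) by simp
  moreover have "distinct g \<and> set g = {0..<t}" if "g \<in> set F \<union> set F'" for g
    using that entries(2) entries'(2) by blast
  ultimately show "F = F'"
    using overlapping_chain_eq[of F F' "{0..<t}" "t - s" s] entries(3) entries'(3)
    by (simp add: len)
qed

lemma card_LRM_le:
  assumes "1 \<le> s" "s \<le> t" "t \<le> n"
  shows "finite (LRM s t n)"
    and "card (LRM s t n) \<le> fact (t - s) * \<Prod>{Suc (t - s)..t} ^ (n div s)"
proof -
  define P where "P = arrangements {0..<t - s} (t - s)"
  define Q where "Q = {L. set L \<subseteq> arrangements {0..<t} s \<and> length L = n div s}"
  have finP: "finite P" and finQ: "finite Q"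
    unfolding P_def Q_def by (simp_all add: finite_arrangements finite_lists_length_eq)
  note image = LRM_code_image[OF assms, folded P_def Q_def]
    and inj = inj_on_LRM_code[OF assms(2,3)]
  show "finite (LRM s t n)"
    using finite_imageD[OF finite_subset[OF image] inj] finP finQ by blast
  have "card P = fact (t - s)"
    unfolding P_def by (subst card_arrangements) (simp_all add: fact_prod)
  moreover have "card Q = \<Prod>{Suc (t - s)..t} ^ (n div s)"
    unfolding Q_def using assms(2)
    by (simp add: card_lists_length_eq finite_arrangements card_arrangements)
  ultimately show "card (LRM s t n) \<le> fact (t - s) * \<Prod>{Suc (t - s)..t} ^ (n div s)"
    using card_inj_on_le[OF inj image] finP finQ by (simp add: card_cartesian_product)
qed

lemma LRM_bar_eq_image: "LRM_bar s t n = map (top_digits s) ` LRM s t n"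
  unfolding LRM_bar_def LRM_def by (auto simp: image_def)

theorem lemma1:
  fixes s t n :: nat
  assumes "1 \<le> s" "s \<le> t" "t \<le> n" "s dvd n"
  shows "card (LRM_bar s t n) \<le> card (LRM s t n) \<and>
         real (card (LRM s t n)) \<le> fact (t - s) * (fact t / fact (t - s)) ^ (n div s)"
proof
  show "card (LRM_bar s t n) \<le> card (LRM s t n)"
    unfolding LRM_bar_eq_image by (rule card_image_le[OF card_LRM_le(1)[OF assms(1-3)]])
  have "(fact t :: nat) = fact (t - s) * \<Prod>{Suc (t - s)..t}"
    by (rule fact_eq_fact_times) simp
  then have "(fact t :: real) = fact (t - s) * real (\<Prod>{Suc (t - s)..t})"
    by (metis of_nat_fact of_nat_mult)
  then have ratio: "(fact t / fact (t - s) :: real) = real (\<Prod>{Suc (t - s)..t})"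
    by simp
  have "real (card (LRM s t n)) \<le> real (fact (t - s) * \<Prod>{Suc (t - s)..t} ^ (n div s))"
    using card_LRM_le(2)[OF assms(1-3)] by (rule of_nat_mono)
  also have "\<dots> = fact (t - s) * (fact t / fact (t - s)) ^ (n div s)"
    unfolding ratio by simp
  finally show "real (card (LRM s t n)) \<le> fact (t - s) * (fact t / fact (t - s)) ^ (n div s)" .
qed

end
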